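(* Let $w$ and $t$ be positive integers with $t\ge 2$, and let $u=\lfloor (\frac{t}{2}+1)^2\rfloor$. Then there exists a constant $c>0$, depending only on $w$ and $t$, such that for every sufficiently large integer $v$ there exists a $t$-IPPS$(w,v)$ of size at least $c\,v^{\frac{w}{u-1}}$; that is, $I_t(w,v)\ge c\,v^{\frac{w}{u-1}}$.
   Context: A $(w,v)$ set system is a pair $(\mathcal{X},\mathcal{B})$ with $|\mathcal{X}|=v$ and $\mathcal{B}\subseteq\binom{\mathcal{X}}{w}$, where $\binom{\mathcal{X}}{w}$ denotes the family of all $w$-element subsets of $\mathcal{X}$; elements of $\mathcal{B}$ are called blocks. For a $w$-subset $T\subseteq\mathcal{X}$ let $P_t(T)=\{\mathcal{P}\subseteq\mathcal{B}: |\mathcal{P}|\le t,\ T\subseteq\bigcup_{B\in\mathcal{P}}B\}$. A $(w,v)$ set system is a $t$-parent-identifying set system, written $t$-IPPS$(w,v)$, if for every $w$-subset $T\subseteq\mathcal{X}$, either $P_t(T)$ is empty or $\bigcap_{\mathcal{P}\in P_t(T)}\mathcal{P}\neq\emptyset$. The size of a $t$-IPPS$(w,v)$ is $|\mathcal{B}|$, and $I_t(w,v)$ denotes the maximum size of a $t$-IPPS$(w,v)$. *)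

theory Defs
  imports Complex_Main
begin

definition Pt :: "nat \<Rightarrow> 'a set set \<Rightarrow> 'a set \<Rightarrow> 'a set set set" where
  "Pt t \<B> T = {\<P>. \<P> \<subseteq> \<B> \<and> card \<P> \<le> t \<and> T \<subseteq> \<Union>\<P>}"

definition set_system :: "nat \<Rightarrow> nat \<Rightarrow> 'a set \<Rightarrow> 'a set set \<Rightarrow> bool" where
  "set_system w v X \<B> \<longleftrightarrow> finite X \<and> card X = v \<and>
     \<B> \<subseteq> {B. B \<subseteq> X \<and> card B = w}"

definition IPPS :: "nat \<Rightarrow> nat \<Rightarrow> nat \<Rightarrow> 'a set \<Rightarrow> 'a set set \<Rightarrow> bool" where
  "IPPS t w v X \<B> \<longleftrightarrow> set_system w v X \<B> \<and>
     (\<forall>T. T \<subseteq> X \<and> card T = w \<longrightarrow>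
        Pt t \<B> T = {} \<or> \<Inter>(Pt t \<B> T) \<noteq> {})"

end

theory Submission
  imports Defs
begin

text \<open>Suppose a \<open>w\<close>-set \<open>T\<close> has parent families but no common parent. A minimal subfamily \<open>Q\<close>
  of \<open>Pt t F T\<close> with empty intersection has a union \<open>S\<close> of at most
  \<open>card Q * (t + 2 - card Q) \<le> u\<close> blocks, and every point of \<open>T\<close> lies in two blocks of \<open>S\<close>;
  double counting shows that these \<open>j \<le> u\<close> blocks of size \<open>w\<close> span at most \<open>(j - 1) * w\<close> points.
  Hence a family of \<open>w\<close>-sets without such crowded subfamilies is a \<open>t\<close>-IPPS.

  There are \<open>O(v ^ ((j - 1) * w)) = O(N ^ (j - 1))\<close> crowded subfamilies of size \<open>j\<close>, where
  \<open>N = v choose w \<ge> (v / w) ^ w\<close>. So a random family of \<open>m \<approx> c * N powr (1 / (u - 1))\<close> of the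
  \<open>w\<close>-sets contains on average at most \<open>m / 2\<close> of them, and deleting one block from each leaves
  a \<open>t\<close>-IPPS with at least \<open>m / 2\<close> blocks.\<close>

lemma obtain_minimal_subfamily_Inter_empty:
  assumes "finite C" and "\<Inter>C = {}"
  obtains Q f where "Q \<subseteq> C" and "\<Inter>Q = {}" and "\<And>q q'. q \<in> Q \<Longrightarrow> q' \<in> Q \<Longrightarrow> f q \<in> q' \<longleftrightarrow> q' \<noteq> q"
proof -
  define P where "P Q \<longleftrightarrow> Q \<subseteq> C \<and> \<Inter>Q = {}" for Q
  obtain Q where Q: "P Q" and least: "\<And>Q'. P Q' \<Longrightarrow> card Q \<le> card Q'"
    using ex_has_least_nat[of P C card] assms(2) unfolding P_def by auto
  have "\<exists>x. x \<in> \<Inter>(Q - {q}) \<and> x \<notin> q" if q: "q \<in> Q" for q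
  proof -
    have "finite Q" using Q assms(1) finite_subset unfolding P_def by blast
    then have "\<not> P (Q - {q})" using least[of "Q - {q}"] card_Diff1_less[OF _ q] by linarith
    then obtain x where x: "x \<in> \<Inter>(Q - {q})" using Q unfolding P_def by auto
    have "x \<notin> q"
    proof
      assume "x \<in> q"
      with x q have "x \<in> \<Inter>Q" by blast
      with Q show False unfolding P_def by blast
    qed
    with x show ?thesis by blast
  qed
  then obtain f where f: "\<And>q. q \<in> Q \<Longrightarrow> f q \<in> \<Inter>(Q - {q}) \<and> f q \<notin> q" by metis
  then have "f q \<in> q' \<longleftrightarrow> q' \<noteq> q" if "q \<in> Q" "q' \<in> Q" for q q'
    using that by blast
  with Q that show ?thesis unfolding P_def by blast
qed

lemma card_Union_le_if_distinct_missing_points: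
  assumes fin: "finite Q" and "Q \<noteq> {}"
    and missing: "\<And>q q'. q \<in> Q \<Longrightarrow> q' \<in> Q \<Longrightarrow> f q \<in> q' \<longleftrightarrow> q' \<noteq> q"
    and small: "\<And>q. q \<in> Q \<Longrightarrow> finite q \<and> card q \<le> t"
  shows "card (\<Union>Q) \<le> card Q * (t + 2 - card Q)"
proof -
  have "inj_on f Q"
  proof (rule inj_onI)
    fix a b assume a: "a \<in> Q" and b: "b \<in> Q" and eq: "f a = f b"
    show "a = b"
    proof (rule ccontr)
      assume "a \<noteq> b"
      then have "f a \<in> b" using missing[OF a b] by simp
      with eq missing[OF b b] show False by simp
    qed
  qed
  then have card_X: "card (f ` Q) = card Q" by (simp add: card_image)
  let ?X = "f ` Q"
  have rest: "card (q - ?X) + (card Q - 1) \<le> t" if q: "q \<in> Q" for q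
  proof -
    have "?X - {f q} \<subseteq> q \<inter> ?X"
    proof
      fix x assume "x \<in> ?X - {f q}"
      then obtain q' where "q' \<in> Q" "q' \<noteq> q" "x = f q'" by blast
      then show "x \<in> q \<inter> ?X" using missing[of q' q] q by blast
    qed
    then have "card (?X - {f q}) \<le> card (q \<inter> ?X)"
      using small[OF q] by (intro card_mono) auto
    moreover have "card (?X - {f q}) = card Q - 1" using card_X q fin by simp
    moreover have "card q = card (q \<inter> ?X) + card (q - ?X)"
      using small[OF q] by (metis card_Int_Diff finite_Int)
    ultimately show ?thesis using small[OF q] by linarith
  qed
  obtain q where "q \<in> Q" using \<open>Q \<noteq> {}\<close> by auto
  then have Q_range: "1 \<le> card Q" "card Q \<le> t + 1"
    using fin rest[of q] by (auto simp: Suc_le_eq card_gt_0_iff)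
  have "\<Union>Q \<subseteq> ?X \<union> (\<Union>q\<in>Q. q - ?X)" by auto
  then have "card (\<Union>Q) \<le> card (?X \<union> (\<Union>q\<in>Q. q - ?X))"
    using fin small by (intro card_mono) auto
  also have "\<dots> \<le> card ?X + card (\<Union>q\<in>Q. q - ?X)" by (rule card_Un_le)
  also have "card (\<Union>q\<in>Q. q - ?X) \<le> (\<Sum>q\<in>Q. card (q - ?X))" using fin by (rule card_UN_le)
  also have "\<dots> \<le> card Q * (t + 1 - card Q)"
    using sum_bounded_above[of Q "\<lambda>q. card (q - ?X)" "t + 1 - card Q"] rest by fastforce
  finally have "card (\<Union>Q) \<le> card Q + card Q * (t + 1 - card Q)" using card_X by simp
  also have "\<dots> = card Q * (t + 2 - card Q)"
  proof -
    have "t + 2 - card Q = Suc (t + 1 - card Q)" using Q_range by linarith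
    then show ?thesis by simp
  qed
  finally show ?thesis .
qed

text \<open>If only one block of \<open>\<Union>Q\<close> contained \<open>y\<close>, it would lie in every member of \<open>Q\<close>.\<close>
lemma two_le_card_blocks_containing:
  assumes fin: "finite (\<Union>Q)" and empty: "\<Inter>Q = {}" and covers: "\<And>P. P \<in> Q \<Longrightarrow> y \<in> \<Union>P"
  shows "2 \<le> card {B \<in> \<Union>Q. y \<in> B}"
proof (rule ccontr)
  define A where "A = {B \<in> \<Union>Q. y \<in> B}"
  assume "\<not> 2 \<le> card {B \<in> \<Union>Q. y \<in> B}"
  then have "card A \<le> 1" unfolding A_def by simp
  moreover have "finite A" using fin unfolding A_def by (rule finite_subset[rotated]) auto
  ultimately have unique: "B = B'" if "B \<in> A" "B' \<in> A" for B B'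
    using that card_le_Suc0_iff_eq[of A] by simp
  obtain P0 where P0: "P0 \<in> Q" using empty by auto
  then obtain B where B: "B \<in> P0" "y \<in> B" using covers by blast
  have "B \<in> \<Inter>Q"
  proof (rule InterI)
    fix P assume P: "P \<in> Q"
    obtain B' where B': "B' \<in> P" "y \<in> B'" using covers[OF P] by blast
    have "B = B'" by (rule unique) (use B P0 B' P in \<open>auto simp: A_def\<close>)
    with B' show "B \<in> P" by simp
  qed
  with empty show False by simp
qed

lemma mult_diff_le_floor_square:
  fixes n t :: nat
  shows "n * (t + 2 - n) \<le> nat \<lfloor>(real t / 2 + 1) ^ 2\<rfloor>"
proof -
  have "real (n * (t + 2 - n)) \<le> (real t / 2 + 1) ^ 2"
  proof (cases "n \<le> t + 2")
    case True
    then have "real (n * (t + 2 - n)) = real n * (real t + 2 - real n)" by (simp add: of_nat_diff)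
    also have "\<dots> \<le> (real t / 2 + 1) ^ 2"
      using sum_squares_ge_zero[of "real t / 2 + 1 - real n" 0]
      by (simp add: power2_eq_square algebra_simps)
    finally show ?thesis .
  qed simp
  then show ?thesis by (simp add: le_nat_floor)
qed

lemma add_one_le_floor_square: "t + 1 \<le> nat \<lfloor>(real t / 2 + 1) ^ 2\<rfloor>"
  using mult_diff_le_floor_square[of 1 t] by simp

definition crowded :: "nat \<Rightarrow> nat \<Rightarrow> 'a set set \<Rightarrow> bool" where
  "crowded u w S \<longleftrightarrow> 1 \<le> card S \<and> card S \<le> u \<and> card (\<Union>S) + w \<le> card S * w"

lemma card_Union_add_card_doubly_covered_le:
  assumes fin: "finite S" and blocks: "\<And>B. B \<in> S \<Longrightarrow> finite B \<and> card B = w"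
    and covered: "T \<subseteq> \<Union>S" and twice: "\<And>y. y \<in> T \<Longrightarrow> 2 \<le> card {B \<in> S. y \<in> B}"
  shows "card (\<Union>S) + card T \<le> card S * w"
proof -
  let ?U = "\<Union>S" and ?deg = "\<lambda>y. card {B \<in> S. y \<in> B}"
  have fin_U: "finite ?U" using fin blocks by auto
  have "card S * w = (\<Sum>B\<in>S. card {y \<in> ?U. y \<in> B})"
  proof -
    have "{y \<in> ?U. y \<in> B} = B" if "B \<in> S" for B using that by auto
    then show ?thesis using blocks by simp
  qed
  also have "\<dots> = (\<Sum>y\<in>?U. ?deg y)"
    using sum_multicount_gen[of S ?U "\<lambda>B y. y \<in> B" ?deg] fin fin_U by blast
  also have "\<dots> = (\<Sum>y\<in>?U - T. ?deg y) + (\<Sum>y\<in>T. ?deg y)"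
    using sum.subset_diff[OF covered fin_U] .
  also have "\<dots> \<ge> (\<Sum>y\<in>?U - T. 1) + (\<Sum>y\<in>T. 2)"
  proof (intro add_mono sum_mono)
    fix y assume "y \<in> ?U - T"
    then have "{B \<in> S. y \<in> B} \<noteq> {}" by auto
    then show "1 \<le> ?deg y" using fin by (simp add: Suc_le_eq card_gt_0_iff)
  qed (use twice in auto)
  finally show ?thesis
    using card_Diff_subset[OF finite_subset[OF covered fin_U] covered]
      card_mono[OF fin_U covered] by simp
qed

lemma exists_crowded_subfamily_if_not_identifying:
  fixes F :: "'a set set"
  assumes fin: "finite F" and blocks: "\<And>B. B \<in> F \<Longrightarrow> card B = w" and w: "1 \<le> w"
    and T: "card T = w" and nonempty: "Pt t F T \<noteq> {}" and empty: "\<Inter>(Pt t F T) = {}"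
  shows "\<exists>S\<subseteq>F. crowded (nat \<lfloor>(real t / 2 + 1) ^ 2\<rfloor>) w S"
proof -
  have fin_Pt: "finite (Pt t F T)"
    by (rule finite_subset[of _ "Pow F"]) (use fin in \<open>auto simp: Pt_def\<close>)
  obtain Q f where Q: "Q \<subseteq> Pt t F T" and Q_empty: "\<Inter>Q = {}"
    and missing: "\<And>q q'. q \<in> Q \<Longrightarrow> q' \<in> Q \<Longrightarrow> f q \<in> q' \<longleftrightarrow> q' \<noteq> q"
    using obtain_minimal_subfamily_Inter_empty[OF fin_Pt empty] by blast
  have members: "P \<subseteq> F" "finite P \<and> card P \<le> t" "T \<subseteq> \<Union>P" if "P \<in> Q" for P
    using that Q fin unfolding Pt_def by (auto intro: finite_subset)
  define S where "S = \<Union>Q"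
  have S_F: "S \<subseteq> F" using members(1) by (auto simp: S_def)
  then have fin_S: "finite S" using fin finite_subset by blast
  have S_blocks: "finite B \<and> card B = w" if "B \<in> S" for B
    using that S_F blocks[of B] w card_ge_0_finite[of B] by auto
  have "Q \<noteq> {}" using Q_empty by auto
  then obtain P0 where P0: "P0 \<in> Q" by blast
  have T_S: "T \<subseteq> \<Union>S" using members(3)[OF P0] P0 unfolding S_def by blast
  have twice: "2 \<le> card {B \<in> S. y \<in> B}" if y: "y \<in> T" for y
    unfolding S_def
  proof (rule two_le_card_blocks_containing[OF _ Q_empty])
    show "finite (\<Union>Q)" using fin_S by (simp add: S_def)
    show "y \<in> \<Union>P" if "P \<in> Q" for P using members(3)[OF that] y by blast
  qed
  have "card S \<le> card Q * (t + 2 - card Q)"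
    unfolding S_def using card_Union_le_if_distinct_missing_points[OF
        finite_subset[OF Q fin_Pt] \<open>Q \<noteq> {}\<close> missing members(2)] .
  then have "card S \<le> nat \<lfloor>(real t / 2 + 1) ^ 2\<rfloor>"
    using mult_diff_le_floor_square[of "card Q" t] by linarith
  moreover have "card (\<Union>S) + w \<le> card S * w"
    using card_Union_add_card_doubly_covered_le[OF fin_S S_blocks T_S twice] T by simp
  moreover have "1 \<le> card S"
    using T_S T w fin_S by (auto simp: Suc_le_eq card_gt_0_iff)
  ultimately show ?thesis using S_F unfolding crowded_def by blast
qed

lemma IPPS_if_crowded_free:
  assumes "finite X" and F: "F \<subseteq> {B. B \<subseteq> X \<and> card B = w}" and w: "1 \<le> w"
    and free: "\<And>S. S \<subseteq> F \<Longrightarrow> \<not> crowded (nat \<lfloor>(real t / 2 + 1) ^ 2\<rfloor>) w S"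
  shows "IPPS t w (card X) X F"
  unfolding IPPS_def set_system_def
proof (intro conjI allI impI)
  have "finite F" using F \<open>finite X\<close> by (auto intro: finite_subset[of _ "Pow X"])
  moreover have "\<And>B. B \<in> F \<Longrightarrow> card B = w" using F by auto
  ultimately show "Pt t F T = {} \<or> \<Inter>(Pt t F T) \<noteq> {}" if "T \<subseteq> X \<and> card T = w" for T
    using exists_crowded_subfamily_if_not_identifying[of F w T t] w free that by auto
qed (use assms in auto)

lemma card_subsets_card_le:
  assumes "finite X" and "X \<noteq> {}"
  shows "card {U. U \<subseteq> X \<and> card U \<le> L} \<le> (L + 1) * card X ^ L"
proof -
  have "{U. U \<subseteq> X \<and> card U \<le> L} = (\<Union>k\<le>L. {U. U \<subseteq> X \<and> card U = k})" by auto
  then have "card {U. U \<subseteq> X \<and> card U \<le> L} \<le> (\<Sum>k\<le>L. card {U. U \<subseteq> X \<and> card U = k})"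
    by (simp add: card_UN_le)
  also have "\<dots> = (\<Sum>k\<le>L. card X choose k)" using assms(1) by (simp add: n_subsets)
  also have "\<dots> \<le> (\<Sum>k\<le>L. card X ^ L)"
  proof (rule sum_mono)
    fix k assume "k \<in> {..L}"
    then have "card X ^ k \<le> card X ^ L"
      using assms by (intro power_increasing) (auto simp: Suc_le_eq card_gt_0_iff)
    moreover have "card X choose k \<le> card X ^ k"
      by (cases "k \<le> card X") (auto simp: binomial_le_pow binomial_eq_0)
    ultimately show "card X choose k \<le> card X ^ L" by linarith
  qed
  finally show ?thesis by simp
qed

lemma card_families_card_Union_le:
  assumes "finite X" and "X \<noteq> {}"
  shows "card {S. \<Union>S \<subseteq> X \<and> card (\<Union>S) \<le> L} \<le> (L + 1) * card X ^ L * 2 ^ 2 ^ L"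
proof -
  let ?U = "{U. U \<subseteq> X \<and> card U \<le> L}"
  have fin_U: "finite ?U" using assms(1) by (auto intro: finite_subset[of _ "Pow X"])
  have "{S. \<Union>S \<subseteq> X \<and> card (\<Union>S) \<le> L} \<subseteq> (\<Union>U\<in>?U. Pow (Pow U))" by auto
  then have "card {S. \<Union>S \<subseteq> X \<and> card (\<Union>S) \<le> L} \<le> card (\<Union>U\<in>?U. Pow (Pow U))"
    using fin_U assms(1) by (intro card_mono) (auto intro: finite_subset)
  also have "\<dots> \<le> (\<Sum>U\<in>?U. card (Pow (Pow U)))" by (rule card_UN_le[OF fin_U])
  also have "\<dots> \<le> (\<Sum>U\<in>?U. 2 ^ 2 ^ L)"
  proof (rule sum_mono)
    fix U assume "U \<in> ?U"
    then have "finite U" "card U \<le> L" using assms(1) by (auto intro: finite_subset)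
    then show "card (Pow (Pow U)) \<le> 2 ^ 2 ^ L" by (simp add: card_Pow)
  qed
  also have "\<dots> \<le> (L + 1) * card X ^ L * 2 ^ 2 ^ L"
    using card_subsets_card_le[OF assms, of L] by simp
  finally show ?thesis .
qed

lemma pow_le_pow_mult_binomial:
  fixes k n :: nat
  assumes "k \<le> n"
  shows "n ^ k \<le> k ^ k * (n choose k)"
proof (cases "k = 0")
  case False
  have "(real n / real k) ^ k \<le> real (n choose k)"
    using binomial_ge_n_over_k_pow_k[OF assms] by simp
  then have "real n ^ k \<le> real k ^ k * real (n choose k)"
    using False by (simp add: power_divide divide_le_eq mult.commute)
  then show ?thesis by (simp flip: of_nat_power of_nat_mult)
qed simp

definition crowded_const :: "nat \<Rightarrow> nat \<Rightarrow> nat" where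
  "crowded_const u w = ((u - 1) * w + 1) * 2 ^ 2 ^ ((u - 1) * w) * w ^ ((u - 1) * w)"

lemma crowded_const_pos: "1 \<le> w \<Longrightarrow> 0 < crowded_const u w"
  by (simp add: crowded_const_def)

lemma card_crowded_families_le:
  assumes X: "finite X" and w: "1 \<le> w" "w \<le> card X" and j: "j \<le> u"
  shows "card {S. S \<subseteq> {B. B \<subseteq> X \<and> card B = w} \<and> card S = j \<and> crowded u w S}
    \<le> crowded_const u w * (card X choose w) ^ (j - 1)"
proof -
  define L where "L = (u - 1) * w"
  have jL: "(j - 1) * w \<le> L" unfolding L_def using j by (simp add: diff_le_mono)
  have "X \<noteq> {}" using w by auto
  have "{S. S \<subseteq> {B. B \<subseteq> X \<and> card B = w} \<and> card S = j \<and> crowded u w S}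
      \<subseteq> {S. \<Union>S \<subseteq> X \<and> card (\<Union>S) \<le> (j - 1) * w}"
    by (auto simp: crowded_def diff_mult_distrib)
  moreover have "finite {S. \<Union>S \<subseteq> X \<and> card (\<Union>S) \<le> (j - 1) * w}"
    using X by (auto intro: finite_subset[of _ "Pow (Pow X)"])
  ultimately have "card {S. S \<subseteq> {B. B \<subseteq> X \<and> card B = w} \<and> card S = j \<and> crowded u w S}
      \<le> ((j - 1) * w + 1) * card X ^ ((j - 1) * w) * 2 ^ 2 ^ ((j - 1) * w)"
    using card_families_card_Union_le[OF X \<open>X \<noteq> {}\<close>, of "(j - 1) * w"]
    by (meson card_mono order_trans)
  also have "\<dots> = ((j - 1) * w + 1) * 2 ^ 2 ^ ((j - 1) * w) * card X ^ ((j - 1) * w)"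
    by (simp only: ac_simps)
  also have "\<dots> \<le> (L + 1) * 2 ^ 2 ^ L * card X ^ ((j - 1) * w)"
    using jL by (intro mult_right_mono mult_mono) auto
  also have "card X ^ ((j - 1) * w) = (card X ^ w) ^ (j - 1)"
    by (simp add: power_mult mult.commute)
  also have "\<dots> \<le> (w ^ w * (card X choose w)) ^ (j - 1)"
    using pow_le_pow_mult_binomial[OF w(2)] by (rule power_mono) simp
  also have "\<dots> = w ^ ((j - 1) * w) * (card X choose w) ^ (j - 1)"
    by (simp add: power_mult_distrib power_mult mult.commute)
  also have "\<dots> \<le> w ^ L * (card X choose w) ^ (j - 1)"
    using jL w by (intro mult_right_mono power_increasing) auto
  finally show ?thesis
    unfolding crowded_const_def L_def[symmetric] by (simp add: mult.assoc)
qed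

lemma sum_crowded_le:
  fixes m :: nat
  assumes X: "finite X" and w: "1 \<le> w" "w \<le> card X" and m: "1 \<le> m"
  defines "N \<equiv> card X choose w"
  shows "(\<Sum>S | S \<subseteq> {B. B \<subseteq> X \<and> card B = w} \<and> crowded u w S. (real m / real N) ^ card S)
    \<le> real (u * crowded_const u w * m ^ u) / real N"
proof -
  let ?A = "{S. S \<subseteq> {B. B \<subseteq> X \<and> card B = w} \<and> crowded u w S}"
  let ?K = "real (crowded_const u w)"
  have N: "real N > 0" using w unfolding N_def by simp
  have fin_A: "finite ?A" using X by (auto intro: finite_subset[of _ "Pow (Pow X)"])
  have "card ` ?A \<subseteq> {1..u}" by (auto simp: crowded_def)
  then have "(\<Sum>S\<in>?A. (real m / real N) ^ card S)
      = (\<Sum>j=1..u. \<Sum>S\<in>{S \<in> ?A. card S = j}. (real m / real N) ^ card S)"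
    by (rule sum.group[OF fin_A finite_atLeastAtMost, symmetric])
  also have "\<dots> \<le> (\<Sum>j=1..u. ?K * real m ^ u / real N)"
  proof (rule sum_mono)
    fix j assume j: "j \<in> {1..u}"
    have "{S \<in> ?A. card S = j} = {S. S \<subseteq> {B. B \<subseteq> X \<and> card B = w} \<and> card S = j \<and> crowded u w S}"
      by auto
    then have "(\<Sum>S\<in>{S \<in> ?A. card S = j}. (real m / real N) ^ card S)
        = real (card {S. S \<subseteq> {B. B \<subseteq> X \<and> card B = w} \<and> card S = j \<and> crowded u w S})
          * (real m / real N) ^ j"
      by simp
    also have "\<dots> \<le> ?K * real N ^ (j - 1) * (real m / real N) ^ j"
      using card_crowded_families_le[OF X w, of j u] j unfolding N_def
      by (intro mult_right_mono) (simp_all flip: of_nat_power of_nat_mult)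
    also have "\<dots> = ?K * real m ^ j / real N"
      using j N by (simp add: power_divide power_diff field_simps)
    also have "\<dots> \<le> ?K * real m ^ u / real N"
      using j m N by (intro divide_right_mono mult_left_mono power_increasing) auto
    finally show "(\<Sum>S\<in>{S \<in> ?A. card S = j}. (real m / real N) ^ card S) \<le> ?K * real m ^ u / real N" .
  qed
  also have "\<dots> = real (u * crowded_const u w * m ^ u) / real N" by simp
  finally show ?thesis by simp
qed

lemma card_supersets_card:
  assumes "finite A" and "S \<subseteq> A" and "card S \<le> m"
  shows "card {F. F \<subseteq> A \<and> card F = m \<and> S \<subseteq> F} = (card A - card S) choose (m - card S)"
proof -
  have fin_S: "finite S" using assms finite_subset by blast
  have "bij_betw (\<lambda>G. G \<union> S) {G. G \<subseteq> A - S \<and> card G = m - card S} {F. F \<subseteq> A \<and> card F = m \<and> S \<subseteq> F}"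
  proof (rule bij_betw_byWitness[where f' = "\<lambda>F. F - S"])
    show "(\<lambda>G. G \<union> S) ` {G. G \<subseteq> A - S \<and> card G = m - card S} \<subseteq> {F. F \<subseteq> A \<and> card F = m \<and> S \<subseteq> F}"
    proof clarify
      fix G assume G: "G \<subseteq> A - S" "card G = m - card S"
      then have "card (G \<union> S) = card G + card S"
        using assms(1) fin_S by (intro card_Un_disjoint) (auto intro: finite_subset)
      then show "G \<union> S \<subseteq> A \<and> card (G \<union> S) = m \<and> S \<subseteq> G \<union> S" using G assms by auto
    qed
    show "(\<lambda>F. F - S) ` {F. F \<subseteq> A \<and> card F = m \<and> S \<subseteq> F} \<subseteq> {G. G \<subseteq> A - S \<and> card G = m - card S}"
      using assms(1) fin_S by (auto simp: card_Diff_subset intro: finite_subset)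
  qed auto
  then have "card {F. F \<subseteq> A \<and> card F = m \<and> S \<subseteq> F} = card {G. G \<subseteq> A - S \<and> card G = m - card S}"
    by (simp add: bij_betw_same_card)
  also have "\<dots> = (card A - card S) choose (m - card S)"
    using assms fin_S by (simp add: n_subsets card_Diff_subset)
  finally show ?thesis .
qed

lemma binomial_diff_mult_pow_le:
  fixes j m N :: nat
  assumes "j \<le> m" and "m \<le> N"
  shows "real ((N - j) choose (m - j)) * real N ^ j \<le> real m ^ j * real (N choose m)"
  using assms(1)
proof (induction j)
  case (Suc j)
  let ?X = "real ((N - Suc j) choose (m - Suc j))" and ?Y = "real ((N - j) choose (m - j))"
  have "(m - j) * ((N - j) choose (m - j)) = (N - j) * ((N - Suc j) choose (m - Suc j))"
    using times_binomial_minus1_eq[of "m - j" "N - j"] Suc.prems by simp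
  then have pascal: "real (m - j) * ?Y = real (N - j) * ?X"
    by (simp flip: of_nat_mult)
  have "real j * real m \<le> real j * real N" using assms(2) by (simp add: mult_left_mono)
  then have "real (m - j) * real N \<le> real (N - j) * real m"
    using Suc.prems assms(2) by (simp add: of_nat_diff algebra_simps)
  then have "real (m - j) * real N * ?Y \<le> real (N - j) * real m * ?Y"
    by (intro mult_right_mono) auto
  then have "real (N - j) * (?X * real N) \<le> real (N - j) * (real m * ?Y)"
    using pascal by (simp add: algebra_simps)
  moreover have "real (N - j) > 0" using Suc.prems assms(2) by simp
  ultimately have "?X * real N \<le> real m * ?Y" by simp
  then have "?X * real N ^ Suc j \<le> real m * (?Y * real N ^ j)"
    by (simp add: mult_right_mono mult.assoc[symmetric] mult.commute[of _ "real N"])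
  also have "\<dots> \<le> real m * (real m ^ j * real (N choose m))"
    using Suc by (intro mult_left_mono) auto
  finally show ?case by (simp add: mult.assoc)
qed simp

lemma card_supersets_le:
  assumes A: "finite A" and S: "S \<subseteq> A" and m: "m \<le> card A"
  shows "real (card {F. F \<subseteq> A \<and> card F = m \<and> S \<subseteq> F})
    \<le> (real m / real (card A)) ^ card S * real (card A choose m)"
proof (cases "card S \<le> m")
  case True
  let ?N = "card A" and ?s = "card S"
  have "real ((?N - ?s) choose (m - ?s)) * real ?N ^ ?s \<le> real m ^ ?s * real (?N choose m)"
    using binomial_diff_mult_pow_le[OF True m] .
  moreover have "real ?N ^ ?s > 0" using True m by (cases "?s = 0") auto
  ultimately show ?thesis
    using card_supersets_card[OF A S True] by (simp add: power_divide field_simps)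
next
  case False
  then have "{F. F \<subseteq> A \<and> card F = m \<and> S \<subseteq> F} = {}"
    using A by (auto dest: card_mono[OF finite_subset])
  then show ?thesis by (simp only: card.empty of_nat_0) simp
qed

text \<open>First moment: averaged over all \<open>m\<close>-subsets \<open>F\<close> of \<open>A\<close>, a given \<open>S \<subseteq> A\<close> lies in \<open>F\<close> with
  probability at most \<open>(m / card A) ^ card S\<close>.\<close>
lemma exists_subset_few_subfamilies:
  fixes A :: "'a set" and P :: "'a set \<Rightarrow> bool"
  assumes A: "finite A" and m: "m \<le> card A"
  shows "\<exists>F\<subseteq>A. card F = m \<and>
    real (card {S. S \<subseteq> F \<and> P S}) \<le> (\<Sum>S | S \<subseteq> A \<and> P S. (real m / real (card A)) ^ card S)"
proof -
  let ?FF = "{F. F \<subseteq> A \<and> card F = m}" and ?Bad = "{S. S \<subseteq> A \<and> P S}"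
  let ?E = "\<Sum>S\<in>?Bad. (real m / real (card A)) ^ card S"
  have fin_FF: "finite ?FF" and fin_Bad: "finite ?Bad"
    using A by (auto intro: finite_subset[of _ "Pow A"])
  have card_FF: "card ?FF = card A choose m" using A by (simp add: n_subsets)
  have "(\<Sum>F\<in>?FF. real (card {S \<in> ?Bad. S \<subseteq> F})) = (\<Sum>S\<in>?Bad. real (card {F \<in> ?FF. S \<subseteq> F}))"
    using sum_multicount_gen[OF fin_FF fin_Bad, of "\<lambda>F S. S \<subseteq> F" "\<lambda>S. card {F \<in> ?FF. S \<subseteq> F}"]
    by (simp flip: of_nat_sum)
  also have "\<dots> \<le> (\<Sum>S\<in>?Bad. (real m / real (card A)) ^ card S * real (card ?FF))"
  proof (rule sum_mono)
    fix S assume "S \<in> ?Bad"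
    then have "{F \<in> ?FF. S \<subseteq> F} = {F. F \<subseteq> A \<and> card F = m \<and> S \<subseteq> F}" "S \<subseteq> A" by auto
    then show "real (card {F \<in> ?FF. S \<subseteq> F}) \<le> (real m / real (card A)) ^ card S * real (card ?FF)"
      using card_supersets_le[OF A _ m] card_FF by simp
  qed
  also have "\<dots> = real (card ?FF) * ?E" by (simp add: sum_distrib_left mult.commute)
  finally have total: "(\<Sum>F\<in>?FF. real (card {S \<in> ?Bad. S \<subseteq> F})) \<le> real (card ?FF) * ?E" .
  have "\<exists>F\<in>?FF. real (card {S \<in> ?Bad. S \<subseteq> F}) \<le> ?E"
  proof (rule ccontr)
    assume "\<not> ?thesis"
    moreover have "?FF \<noteq> {}" using card_FF m by (metis card.empty zero_less_binomial less_irrefl)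
    ultimately have "(\<Sum>F\<in>?FF. ?E) < (\<Sum>F\<in>?FF. real (card {S \<in> ?Bad. S \<subseteq> F}))"
      using fin_FF by (intro sum_strict_mono) auto
    with total show False by simp
  qed
  then obtain F where "F \<in> ?FF" and "real (card {S \<in> ?Bad. S \<subseteq> F}) \<le> ?E" by blast
  moreover from \<open>F \<in> ?FF\<close> have "{S \<in> ?Bad. S \<subseteq> F} = {S. S \<subseteq> F \<and> P S}" by auto
  ultimately show ?thesis by auto
qed

lemma exists_subset_free_of_subfamilies:
  assumes fin: "finite F" and "\<not> P {}"
  shows "\<exists>F'\<subseteq>F. card F \<le> card F' + card {S. S \<subseteq> F \<and> P S} \<and> (\<forall>S\<subseteq>F'. \<not> P S)"
proof -
  let ?Bad = "{S. S \<subseteq> F \<and> P S}"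
  have "\<exists>x. x \<in> S" if "S \<in> ?Bad" for S
    using that \<open>\<not> P {}\<close> by (cases "S = {}") auto
  then obtain g where g: "\<And>S. S \<in> ?Bad \<Longrightarrow> g S \<in> S" by metis
  have fin_Bad: "finite ?Bad" using fin by (auto intro: finite_subset[of _ "Pow F"])
  have "card F \<le> card ((F - g ` ?Bad) \<union> g ` ?Bad)"
    using fin fin_Bad by (intro card_mono) auto
  also have "\<dots> \<le> card (F - g ` ?Bad) + card (g ` ?Bad)" by (rule card_Un_le)
  also have "card (g ` ?Bad) \<le> card ?Bad" using fin_Bad by (rule card_image_le)
  finally have "card F \<le> card (F - g ` ?Bad) + card ?Bad" by simp
  moreover have "\<not> P S" if "S \<subseteq> F - g ` ?Bad" for S
    using that g[of S] by auto
  ultimately show ?thesis by blast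
qed

lemma exists_IPPS_card_ge:
  fixes X :: "'a set" and m :: nat
  assumes X: "finite X" and w: "1 \<le> w" "w \<le> card X" and t: "1 \<le> t" and m: "1 \<le> m"
    and u: "u = nat \<lfloor>(real t / 2 + 1) ^ 2\<rfloor>"
    and small: "2 * u * crowded_const u w * m ^ (u - 1) \<le> card X choose w"
  shows "\<exists>B. IPPS t w (card X) X B \<and> m \<le> 2 * card B"
proof -
  let ?\<Omega> = "{B. B \<subseteq> X \<and> card B = w}" and ?N = "card X choose w"
  have u2: "2 \<le> u" using add_one_le_floor_square[of t] t u by simp
  have K: "0 < crowded_const u w" using crowded_const_pos[OF w(1)] .
  have fin_\<Omega>: "finite ?\<Omega>" using X by (auto intro: finite_subset[of _ "Pow X"])
  have card_\<Omega>: "card ?\<Omega> = ?N" using X by (simp add: n_subsets)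
  have N: "real ?N > 0" using w by simp
  have "m \<le> m ^ (u - 1)" using m u2 by (simp add: self_le_power)
  also have "\<dots> \<le> 2 * u * crowded_const u w * m ^ (u - 1)" using K u2 by simp
  finally have "m \<le> card ?\<Omega>" using small card_\<Omega> by linarith
  then obtain F where F: "F \<subseteq> ?\<Omega>" "card F = m"
    and averaged: "real (card {S. S \<subseteq> F \<and> crowded u w S})
      \<le> (\<Sum>S | S \<subseteq> ?\<Omega> \<and> crowded u w S. (real m / real (card ?\<Omega>)) ^ card S)"
    using exists_subset_few_subfamilies[OF fin_\<Omega>] by blast
  note averaged
  also have "\<dots> \<le> real (u * crowded_const u w * m ^ u) / real ?N"
    using sum_crowded_le[OF X w m] card_\<Omega> by simp
  also have "\<dots> \<le> real m / 2"
  proof -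
    have "2 * (u * crowded_const u w * m ^ u) = m * (2 * u * crowded_const u w * m ^ (u - 1))"
      using u2 by (simp add: power_eq_if)
    also have "\<dots> \<le> m * ?N" using small by simp
    finally show ?thesis using N by (simp add: field_simps flip: of_nat_mult)
  qed
  finally have few: "real (card {S. S \<subseteq> F \<and> crowded u w S}) \<le> real m / 2" .
  have fin_F: "finite F" using F(1) fin_\<Omega> by (rule finite_subset)
  have "\<not> crowded u w {}" by (simp add: crowded_def)
  then obtain F' where F': "F' \<subseteq> F" "card F \<le> card F' + card {S. S \<subseteq> F \<and> crowded u w S}"
    and free: "\<forall>S\<subseteq>F'. \<not> crowded u w S"
    using exists_subset_free_of_subfamilies[OF fin_F] by blast
  have "IPPS t w (card X) X F'"
  proof (rule IPPS_if_crowded_free[OF X _ w(1)])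
    show "F' \<subseteq> ?\<Omega>" using F'(1) F(1) by (rule order_trans)
    show "\<not> crowded (nat \<lfloor>(real t / 2 + 1) ^ 2\<rfloor>) w S" if "S \<subseteq> F'" for S
      using free that unfolding u[symmetric] by simp
  qed
  moreover have "m \<le> 2 * card F'" using F'(2) F(2) few by linarith
  ultimately show ?thesis by blast
qed

lemma exists_nat_pow_le_root_le:
  fixes x :: real and r :: nat
  assumes x: "1 \<le> x" and r: "1 \<le> r"
  shows "\<exists>m::nat. 1 \<le> m \<and> real m ^ r \<le> x \<and> x powr (1 / real r) \<le> 2 * real m"
proof -
  define y where "y = x powr (1 / real r)"
  have y: "1 \<le> y" unfolding y_def using x r by (simp add: ge_one_powr_ge_zero)
  define m where "m = nat \<lfloor>y\<rfloor>"
  have m: "real m \<le> y" "y < real m + 1" "1 \<le> m" unfolding m_def using y by linarith+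
  have "real m ^ r \<le> y ^ r" using m(1) by (simp add: power_mono)
  also have "y ^ r = x" unfolding y_def using x r by (simp add: powr_realpow[symmetric] powr_powr)
  finally show ?thesis using m unfolding y_def by (intro exI[of _ m]) auto
qed

lemma exists_IPPS_card_ge_powr:
  fixes X :: "'a set"
  assumes X: "finite X" "card X = v" and w: "1 \<le> w" and t: "1 \<le> t"
    and u: "u = nat \<lfloor>(real t / 2 + 1) ^ 2\<rfloor>"
    and D: "D = 2 * u * crowded_const u w * w ^ w" and v: "w \<le> v" "D \<le> v"
  shows "\<exists>B. IPPS t w v X B \<and>
    real v powr (real w / (real u - 1)) \<le> 4 * real D powr (1 / (real u - 1)) * real (card B)"
proof -
  define r where "r = u - 1"
  define K where "K = real (2 * u * crowded_const u w)"
  define x where "x = real (v choose w) / K"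
  have r: "1 \<le> r" "real u - 1 = real r"
    using add_one_le_floor_square[of t] t u unfolding r_def by (simp_all add: of_nat_diff)
  have K: "K > 0" unfolding K_def using crowded_const_pos[OF w] r by simp
  have D_pos: "real D > 0" using D K w unfolding K_def by simp
  have "real v ^ w \<le> real w ^ w * real (v choose w)"
    using pow_le_pow_mult_binomial[OF v(1)] by (simp flip: of_nat_power of_nat_mult)
  moreover have "real D = K * real w ^ w" unfolding D K_def by simp
  then have "real D * x = real w ^ w * real (v choose w)"
    using K unfolding x_def by (simp add: field_simps)
  ultimately have vx: "real v ^ w \<le> real D * x" by simp
  have "D \<le> v ^ w" using v w by (metis le_trans self_le_power order.strict_trans2 zero_less_one)
  then have "real D * 1 \<le> real D * x" using vx by (simp flip: of_nat_power)
  then have x: "1 \<le> x" using D_pos by simp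
  obtain m where m: "1 \<le> m" "real m ^ r \<le> x" "x powr (1 / real r) \<le> 2 * real m"
    using exists_nat_pow_le_root_le[OF x r(1)] by blast
  have "K * real m ^ r \<le> real (v choose w)" using m(2) K unfolding x_def by (simp add: field_simps)
  then have "2 * u * crowded_const u w * m ^ (u - 1) \<le> v choose w"
    unfolding K_def r_def by (simp flip: of_nat_power of_nat_mult)
  then obtain B where B: "IPPS t w v X B" "m \<le> 2 * card B"
    using exists_IPPS_card_ge[OF X(1) w _ t m(1) u] X(2) v(1) by auto
  have "real v powr (real w / real r) = (real v ^ w) powr (1 / real r)"
    using v w by (simp add: powr_realpow[symmetric] powr_powr)
  also have "\<dots> \<le> (real D * x) powr (1 / real r)" using vx by (simp add: powr_mono2)
  also have "\<dots> = real D powr (1 / real r) * x powr (1 / real r)" using D_pos x by (simp add: powr_mult)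
  also have "\<dots> \<le> real D powr (1 / real r) * (4 * real (card B))"
    using m(3) B(2) by (intro mult_left_mono) auto
  finally show ?thesis using B(1) r(2) by (intro exI[of _ B]) (simp add: mult_ac)
qed

theorem theorem1:
  fixes w t :: nat
  assumes "w \<ge> 1" and "t \<ge> 2"
  defines "u \<equiv> nat \<lfloor>(real t / 2 + 1) ^ 2\<rfloor>"
  shows "\<exists>c::real. c > 0 \<and> (\<exists>N::nat. \<forall>v\<ge>N.
           \<exists>\<B>::nat set set. IPPS t w v {0..<v} \<B> \<and>
             real (card \<B>) \<ge> c * real v powr (real w / (real u - 1)))"
proof -
  have u: "u = nat \<lfloor>(real t / 2 + 1) ^ 2\<rfloor>" by (simp add: u_def)
  define D where "D = 2 * u * crowded_const u w * w ^ w"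
  define C where "C = 4 * real D powr (1 / (real u - 1))"
  have "D > 0"
    using add_one_le_floor_square[of t] crowded_const_pos[of w u] assms by (simp add: D_def u_def)
  then have "C > 0" by (simp add: C_def)
  have "\<exists>\<B>::nat set set. IPPS t w v {0..<v} \<B> \<and> real (card \<B>) \<ge> 1 / C * real v powr (real w / (real u - 1))"
    if v: "max w D \<le> v" for v
  proof -
    obtain \<B> :: "nat set set" where "IPPS t w v {0..<v} \<B>"
      and "real v powr (real w / (real u - 1)) \<le> C * real (card \<B>)"
      using exists_IPPS_card_ge_powr[OF _ _ _ _ u D_def, of "{0..<v}" v] assms(1,2) v
      unfolding C_def by auto
    with \<open>C > 0\<close> show ?thesis by (auto simp: field_simps)
  qed
  with \<open>C > 0\<close> show ?thesis by (intro exI[of _ "1 / C"] conjI exI[of _ "max w D"]) auto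
qed

end
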